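(* There exists a context-free monoid none of whose maximal subgroups is finitely generated. *)

theory Defs
  imports "HOL-Algebra.Generated_Groups"
begin

inductive cfg_derives :: "(nat \<times> (nat + 't) list) set \<Rightarrow> (nat + 't) list \<Rightarrow> (nat + 't) list \<Rightarrow> bool"
  for P where
  refl: "cfg_derives P u u"
| step: "cfg_derives P u (\<alpha> @ [Inl A] @ \<beta>) \<Longrightarrow> (A, \<gamma>) \<in> P \<Longrightarrow> cfg_derives P u (\<alpha> @ \<gamma> @ \<beta>)"

definition context_free :: "'t list set \<Rightarrow> bool" where
  "context_free L \<longleftrightarrow>
     (\<exists>(P :: (nat \<times> (nat + 't) list) set) S. finite P \<and>
        L = {w. cfg_derives P [Inl S] (map Inr w)})"

definition eval_word :: "('a, 'b) monoid_scheme \<Rightarrow> 'a list \<Rightarrow> 'a" where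
  "eval_word M w = foldr (\<lambda>x y. x \<otimes>\<^bsub>M\<^esub> y) w \<one>\<^bsub>M\<^esub>"

text \<open>The word problem w.r.t. the finite generating set A is
  { u # v^rev : u =_M v }, with the marker # encoded as None.\<close>

definition word_problem :: "('a, 'b) monoid_scheme \<Rightarrow> 'a set \<Rightarrow> 'a option list set" where
  "word_problem M A =
     {map Some u @ [None] @ rev (map Some v) | u v.
        set u \<subseteq> A \<and> set v \<subseteq> A \<and> eval_word M u = eval_word M v}"

definition context_free_monoid :: "('a, 'b) monoid_scheme \<Rightarrow> bool" where
  "context_free_monoid M \<longleftrightarrow> monoid M \<and>
     (\<exists>A. finite A \<and> A \<subseteq> carrier M \<and>
        (\<forall>x\<in>carrier M. \<exists>w. set w \<subseteq> A \<and> eval_word M w = x) \<and>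
        context_free (word_problem M A))"

text \<open>The maximal subgroup of M at the idempotent e: the group of units of eMe
  (equivalently the H-class of e), with identity e.\<close>

definition max_subgroup :: "('a, 'b) monoid_scheme \<Rightarrow> 'a \<Rightarrow> 'a monoid" where
  "max_subgroup M e =
     \<lparr> carrier = {x \<in> carrier M. e \<otimes>\<^bsub>M\<^esub> x = x \<and> x \<otimes>\<^bsub>M\<^esub> e = x \<and>
                    (\<exists>y\<in>carrier M. e \<otimes>\<^bsub>M\<^esub> y = y \<and> y \<otimes>\<^bsub>M\<^esub> e = y \<and>
                       x \<otimes>\<^bsub>M\<^esub> y = e \<and> y \<otimes>\<^bsub>M\<^esub> x = e)},
       mult = mult M, one = e \<rparr>"

definition finitely_generated_group :: "('a, 'b) monoid_scheme \<Rightarrow> bool" where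
  "finitely_generated_group G \<longleftrightarrow>
     (\<exists>S. finite S \<and> S \<subseteq> carrier G \<and> generate G S = carrier G)"

end

theory Submission
  imports Defs "HOL-Library.Countable"
begin

(* The monoid is M = <P, Q, A | (P A^n Q)^2 = 1 for all n>. Applying the relators greedily on a
   stack gives normal forms, and two words are equal in M iff they reduce to the same normal
   form c1 ... ck, i.e. arise from it by inserting words equal to 1 between the letters. Those
   words are generated by a context-free grammar, hence so is the word problem.

   A pushdown counter (P opens a counter, A increments it, Q closes it and records the parity of
   its value) makes left-invertible elements act by symmetric difference on finite sets of
   naturals, with the involution P A^n Q acting as {n}. Every idempotent factors as e = r l with
   l r = 1, and x |-> l x r is then a homomorphism from the maximal subgroup at e whose image
   contains {n} for every n, which no finitely generated group can achieve. *)

section \<open>Context-free grammars\<close>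

lemma cfg_derives_trans:
  assumes "cfg_derives G u v" and "cfg_derives G v w"
  shows "cfg_derives G u w"
  using assms(2,1) by (induction rule: cfg_derives.induct) (auto intro: cfg_derives.step)

lemma cfg_derives_context: "cfg_derives G u v \<Longrightarrow> cfg_derives G (x @ u @ y) (x @ v @ y)"
proof (induction rule: cfg_derives.induct)
  case (step u \<alpha> B \<beta> \<gamma>)
  then show ?case using cfg_derives.step[of G "x @ u @ y" "x @ \<alpha>" B "\<beta> @ y" \<gamma>] by simp
qed (rule cfg_derives.refl)

lemma cfg_derives_append:
  assumes "cfg_derives G u u'" and "cfg_derives G v v'"
  shows "cfg_derives G (u @ v) (u' @ v')"
  using cfg_derives_context[OF assms(1), of "[]" v] cfg_derives_context[OF assms(2), of u' "[]"]
  by (auto intro: cfg_derives_trans)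

lemma cfg_derives_concat:
  "list_all2 (\<lambda>X w. cfg_derives G [X] w) xs ws \<Longrightarrow> cfg_derives G xs (concat ws)"
proof (induction rule: list_all2_induct)
  case Nil
  then show ?case by (simp add: cfg_derives.refl)
next
  case (Cons X xs w ws)
  then show ?case using cfg_derives_append[of G "[X]" w xs "concat ws"] by simp
qed

lemma cfg_derives_by_production:
  assumes "(B, \<gamma>) \<in> G" and "list_all2 (\<lambda>X w. cfg_derives G [X] w) \<gamma> ws" and "concat ws = w"
  shows "cfg_derives G [Inl B] w"
proof -
  have "cfg_derives G [Inl B] \<gamma>"
    using cfg_derives.step[OF cfg_derives.refl[of G "[] @ [Inl B] @ []"] assms(1)] by simp
  then show ?thesis using cfg_derives_trans cfg_derives_concat[OF assms(2)] assms(3) by blast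
qed

definition conc :: "'a list set \<Rightarrow> 'a list set \<Rightarrow> 'a list set" where
  "conc X Y = {u @ v | u v. u \<in> X \<and> v \<in> Y}"

fun form_lang :: "(nat \<Rightarrow> 't list set) \<Rightarrow> (nat + 't) list \<Rightarrow> 't list set" where
  "form_lang L [] = {[]}"
| "form_lang L (x # xs) = conc (case x of Inl B \<Rightarrow> L B | Inr t \<Rightarrow> {[t]}) (form_lang L xs)"

lemma form_lang_append: "form_lang L (xs @ ys) = conc (form_lang L xs) (form_lang L ys)"
  by (induction xs) (auto simp: conc_def, metis append.assoc, metis append.assoc)

lemma conc_Nil [simp]: "conc X {[]} = X"
  by (simp add: conc_def)

lemma conc_mono: "X \<subseteq> X' \<Longrightarrow> Y \<subseteq> Y' \<Longrightarrow> conc X Y \<subseteq> conc X' Y'"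
  by (auto simp: conc_def)

lemma form_lang_Inl: "form_lang L [Inl B] = L B"
  by simp

lemma form_lang_map_Inr [simp]: "form_lang L (map Inr w) = {w}"
  by (induction w) (auto simp: conc_def)

lemma cfg_derives_sound:
  assumes sound: "\<And>B \<gamma>. (B, \<gamma>) \<in> G \<Longrightarrow> form_lang L \<gamma> \<subseteq> L B"
  shows "cfg_derives G u v \<Longrightarrow> form_lang L v \<subseteq> form_lang L u"
proof (induction rule: cfg_derives.induct)
  case (step u \<alpha> B \<beta> \<gamma>)
  have "form_lang L (\<alpha> @ \<gamma> @ \<beta>) \<subseteq> form_lang L (\<alpha> @ [Inl B] @ \<beta>)"
    using sound[OF step.hyps(2)] unfolding form_lang_append form_lang_Inl
    by (intro conc_mono) auto
  then show ?case using step.IH by blast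
qed simp

fun rename_terminals :: "('t \<Rightarrow> 's) \<Rightarrow> nat + 't \<Rightarrow> nat + 's" where
  "rename_terminals h (Inl B) = Inl B"
| "rename_terminals h (Inr t) = Inr (h t)"

definition rename_grammar :: "('t \<Rightarrow> 's) \<Rightarrow> (nat \<times> (nat + 't) list) set \<Rightarrow> (nat \<times> (nat + 's) list) set" where
  "rename_grammar h G = (\<lambda>(B, \<gamma>). (B, map (rename_terminals h) \<gamma>)) ` G"

lemma cfg_derives_rename:
  "cfg_derives G u v \<Longrightarrow>
     cfg_derives (rename_grammar h G) (map (rename_terminals h) u) (map (rename_terminals h) v)"
proof (induction rule: cfg_derives.induct)
  case (step u \<alpha> B \<beta> \<gamma>)
  have "(B, map (rename_terminals h) \<gamma>) \<in> rename_grammar h G"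
    using step.hyps(2) by (force simp: rename_grammar_def)
  moreover have "cfg_derives (rename_grammar h G) (map (rename_terminals h) u)
      (map (rename_terminals h) \<alpha> @ [Inl B] @ map (rename_terminals h) \<beta>)"
    using step.IH by simp
  ultimately show ?case using cfg_derives.step by fastforce
qed (rule cfg_derives.refl)

lemma cfg_derives_rename_inv:
  "cfg_derives (rename_grammar h G) u' v' \<Longrightarrow> u' = map (rename_terminals h) u \<Longrightarrow>
     \<exists>v. v' = map (rename_terminals h) v \<and> cfg_derives G u v"
proof (induction rule: cfg_derives.induct)
  case refl
  then show ?case using cfg_derives.refl by blast
next
  case (step u' \<alpha> B \<beta> \<gamma>')
  then obtain v where v: "map (rename_terminals h) v = \<alpha> @ Inl B # \<beta>" "cfg_derives G u v"
    by auto
  then obtain v1 x v2 where v1: "v = v1 @ x # v2" "\<alpha> = map (rename_terminals h) v1"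
      "rename_terminals h x = Inl B" "\<beta> = map (rename_terminals h) v2"
    by (auto simp: map_eq_append_conv Cons_eq_map_conv)
  then have x: "x = Inl B" by (cases x) auto
  obtain \<gamma> where \<gamma>: "(B, \<gamma>) \<in> G" "\<gamma>' = map (rename_terminals h) \<gamma>"
    using step.hyps(2) by (auto simp: rename_grammar_def)
  have "cfg_derives G u (v1 @ \<gamma> @ v2)"
    using cfg_derives.step[of G u v1 B v2 \<gamma>] v(2) v1(1) x \<gamma>(1) by simp
  then show ?case using v1 \<gamma>(2) by (intro exI[of _ "v1 @ \<gamma> @ v2"]) simp
qed

lemma map_rename_terminals_eq_map_Inr:
  "map (rename_terminals h) v = map Inr w' \<Longrightarrow> \<exists>w. v = map Inr w \<and> w' = map h w"
proof (induction v arbitrary: w')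
  case (Cons x v)
  then show ?case by (cases x; cases w') (auto simp: Cons_eq_map_conv)
qed simp

lemma context_free_image_map:
  assumes "context_free L"
  shows "context_free (map h ` L)"
proof -
  obtain G S where G: "finite G" "L = {w. cfg_derives G [Inl S] (map Inr w)}"
    using assms unfolding context_free_def by blast
  have "map h ` L = {w'. cfg_derives (rename_grammar h G) [Inl S] (map Inr w')}"
  proof safe
    fix w assume "w \<in> L"
    then have "cfg_derives (rename_grammar h G) (map (rename_terminals h) [Inl S])
        (map (rename_terminals h) (map Inr w))"
      using cfg_derives_rename G(2) by blast
    then show "cfg_derives (rename_grammar h G) [Inl S] (map Inr (map h w))" by (simp add: comp_def)
  next
    fix w' assume d: "cfg_derives (rename_grammar h G) [Inl S] (map Inr w')"
    obtain v where v: "map (rename_terminals h) v = map Inr w'" "cfg_derives G [Inl S] v"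
      using cfg_derives_rename_inv[OF d, of "[Inl S]"] by auto
    then obtain w where "v = map Inr w" "w' = map h w"
      using map_rename_terminals_eq_map_Inr by blast
    then show "w' \<in> map h ` L" using v(2) G(2) by auto
  qed
  moreover have "finite (rename_grammar h G)" using G(1) by (simp add: rename_grammar_def)
  ultimately show ?thesis unfolding context_free_def by blast
qed

section \<open>Maximal subgroups\<close>

lemma in_max_subgroup_iff:
  "x \<in> carrier (max_subgroup M e) \<longleftrightarrow> x \<in> carrier M \<and> e \<otimes>\<^bsub>M\<^esub> x = x \<and> x \<otimes>\<^bsub>M\<^esub> e = x \<and>
     (\<exists>y\<in>carrier M. e \<otimes>\<^bsub>M\<^esub> y = y \<and> y \<otimes>\<^bsub>M\<^esub> e = y \<and> x \<otimes>\<^bsub>M\<^esub> y = e \<and> y \<otimes>\<^bsub>M\<^esub> x = e)"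
  by (simp add: max_subgroup_def)

lemma max_subgroup_mult [simp]: "x \<otimes>\<^bsub>max_subgroup M e\<^esub> y = x \<otimes>\<^bsub>M\<^esub> y"
  by (simp add: max_subgroup_def)

lemma max_subgroup_one [simp]: "\<one>\<^bsub>max_subgroup M e\<^esub> = e"
  by (simp add: max_subgroup_def)

context monoid
begin

lemma max_subgroup_m_closed:
  assumes e: "e \<in> carrier G"
    and "x \<in> carrier (max_subgroup G e)" "y \<in> carrier (max_subgroup G e)"
  shows "x \<otimes> y \<in> carrier (max_subgroup G e)"
proof -
  obtain x' y' where x: "x \<in> carrier G" "e \<otimes> x = x" "x \<otimes> e = x"
      and x': "x' \<in> carrier G" "e \<otimes> x' = x'" "x' \<otimes> e = x'" "x \<otimes> x' = e" "x' \<otimes> x = e"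
      and y: "y \<in> carrier G" "e \<otimes> y = y" "y \<otimes> e = y"
      and y': "y' \<in> carrier G" "e \<otimes> y' = y'" "y' \<otimes> e = y'" "y \<otimes> y' = e" "y' \<otimes> y = e"
    using assms(2,3) unfolding in_max_subgroup_iff by metis
  have "e \<otimes> (x \<otimes> y) = x \<otimes> y"
    using x y e by (simp flip: m_assoc)
  moreover have "(x \<otimes> y) \<otimes> e = x \<otimes> y"
    using x y e by (simp add: m_assoc)
  moreover have "e \<otimes> (y' \<otimes> x') = y' \<otimes> x'"
    using x' y' e by (simp flip: m_assoc)
  moreover have "(y' \<otimes> x') \<otimes> e = y' \<otimes> x'"
    using x' y' e by (simp add: m_assoc)
  moreover have "(x \<otimes> y) \<otimes> (y' \<otimes> x') = e"
  proof -
    have "(x \<otimes> y) \<otimes> (y' \<otimes> x') = x \<otimes> ((y \<otimes> y') \<otimes> x')"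
      using x(1) y(1) x'(1) y'(1) by (simp add: m_assoc)
    also have "\<dots> = e" using x'(2,4) y'(4) by (simp only:)
    finally show ?thesis .
  qed
  moreover have "(y' \<otimes> x') \<otimes> (x \<otimes> y) = e"
  proof -
    have "(y' \<otimes> x') \<otimes> (x \<otimes> y) = y' \<otimes> ((x' \<otimes> x) \<otimes> y)"
      using x(1) y(1) x'(1) y'(1) by (simp add: m_assoc)
    also have "\<dots> = e" using x'(5) y(2) y'(5) by (simp only:)
    finally show ?thesis .
  qed
  ultimately show ?thesis
    unfolding in_max_subgroup_iff using x(1) y(1) x'(1) y'(1)
    by (intro conjI bexI[of _ "y' \<otimes> x'"] m_closed) auto
qed

lemma group_max_subgroup:
  assumes e: "e \<in> carrier G" "e \<otimes> e = e"
  shows "group (max_subgroup G e)"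
proof (rule groupI)
  fix x y assume "x \<in> carrier (max_subgroup G e)" "y \<in> carrier (max_subgroup G e)"
  then show "x \<otimes>\<^bsub>max_subgroup G e\<^esub> y \<in> carrier (max_subgroup G e)"
    using max_subgroup_m_closed e(1) by simp
next
  show "\<one>\<^bsub>max_subgroup G e\<^esub> \<in> carrier (max_subgroup G e)"
    unfolding in_max_subgroup_iff max_subgroup_one using e by blast
next
  fix x y z assume "x \<in> carrier (max_subgroup G e)" "y \<in> carrier (max_subgroup G e)"
    "z \<in> carrier (max_subgroup G e)"
  then show "x \<otimes>\<^bsub>max_subgroup G e\<^esub> y \<otimes>\<^bsub>max_subgroup G e\<^esub> z =
      x \<otimes>\<^bsub>max_subgroup G e\<^esub> (y \<otimes>\<^bsub>max_subgroup G e\<^esub> z)"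
    unfolding in_max_subgroup_iff max_subgroup_mult by (meson m_assoc)
next
  fix x assume x: "x \<in> carrier (max_subgroup G e)"
  then show "\<one>\<^bsub>max_subgroup G e\<^esub> \<otimes>\<^bsub>max_subgroup G e\<^esub> x = x"
    unfolding in_max_subgroup_iff by simp
  from x obtain y where y: "y \<in> carrier G" "e \<otimes> y = y" "y \<otimes> e = y" "x \<otimes> y = e" "y \<otimes> x = e"
    and "x \<in> carrier G" "e \<otimes> x = x" "x \<otimes> e = x"
    unfolding in_max_subgroup_iff by blast
  then have "y \<in> carrier (max_subgroup G e)" unfolding in_max_subgroup_iff by blast
  with y(5) show "\<exists>y\<in>carrier (max_subgroup G e). y \<otimes>\<^bsub>max_subgroup G e\<^esub> x = \<one>\<^bsub>max_subgroup G e\<^esub>"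
    by auto
qed

lemma sandwich_mult:
  assumes "l \<in> carrier G" "r \<in> carrier G" "x \<in> carrier G" "y \<in> carrier G" "x \<otimes> (r \<otimes> l) = x"
  shows "l \<otimes> (x \<otimes> y) \<otimes> r = (l \<otimes> x \<otimes> r) \<otimes> (l \<otimes> y \<otimes> r)"
proof -
  have "(l \<otimes> x \<otimes> r) \<otimes> (l \<otimes> y \<otimes> r) = l \<otimes> (x \<otimes> (r \<otimes> l)) \<otimes> (y \<otimes> r)"
    using assms(1-4) by (simp add: m_assoc)
  also have "\<dots> = l \<otimes> (x \<otimes> y) \<otimes> r"
    using assms by (simp add: m_assoc)
  finally show ?thesis by simp
qed

lemma Units_sandwich_in_max_subgroup:
  assumes lr: "l \<in> carrier G" "r \<in> carrier G" "l \<otimes> r = \<one>" "r \<otimes> l = e" and u: "u \<in> Units G"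
  shows "r \<otimes> u \<otimes> l \<in> carrier (max_subgroup G e)"
proof -
  have absorb: "(r \<otimes> z \<otimes> l) \<otimes> (r \<otimes> z' \<otimes> l) = r \<otimes> (z \<otimes> z') \<otimes> l"
    if "z \<in> carrier G" "z' \<in> carrier G" for z z'
  proof -
    have "(r \<otimes> z \<otimes> l) \<otimes> (r \<otimes> z' \<otimes> l) = r \<otimes> (z \<otimes> ((l \<otimes> r) \<otimes> z')) \<otimes> l"
      using lr(1,2) that by (simp add: m_assoc)
    also have "\<dots> = r \<otimes> (z \<otimes> z') \<otimes> l" using lr that by simp
    finally show ?thesis .
  qed
  have u': "u \<in> carrier G" "inv u \<in> carrier G" using u by auto
  have "e \<otimes> (r \<otimes> u \<otimes> l) = r \<otimes> u \<otimes> l" "(r \<otimes> u \<otimes> l) \<otimes> e = r \<otimes> u \<otimes> l"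
    using absorb[of \<one> u] absorb[of u \<one>] u' lr by simp_all
  moreover have "e \<otimes> (r \<otimes> inv u \<otimes> l) = r \<otimes> inv u \<otimes> l" "(r \<otimes> inv u \<otimes> l) \<otimes> e = r \<otimes> inv u \<otimes> l"
    using absorb[of \<one> "inv u"] absorb[of "inv u" \<one>] u' lr by simp_all
  moreover have "(r \<otimes> u \<otimes> l) \<otimes> (r \<otimes> inv u \<otimes> l) = e" "(r \<otimes> inv u \<otimes> l) \<otimes> (r \<otimes> u \<otimes> l) = e"
    using absorb[of u "inv u"] absorb[of "inv u" u] u u' lr by simp_all
  moreover have "r \<otimes> u \<otimes> l \<in> carrier G" "r \<otimes> inv u \<otimes> l \<in> carrier G" using u' lr by simp_all
  ultimately show ?thesis
    unfolding in_max_subgroup_iff by blast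
qed

end

lemma (in group) not_finitely_generated_if_sym_diff_hom:
  assumes hom: "\<And>x y. x \<in> carrier G \<Longrightarrow> y \<in> carrier G \<Longrightarrow> f (x \<otimes> y) = sym_diff (f x) (f y)"
    and finite_values: "\<And>x. x \<in> carrier G \<Longrightarrow> finite (f x)"
    and infinite_union: "infinite (\<Union>x\<in>carrier G. f x)"
  shows "\<not> finitely_generated_group G"
proof
  assume "finitely_generated_group G"
  then obtain S where S: "finite S" "S \<subseteq> carrier G" "generate G S = carrier G"
    unfolding finitely_generated_group_def by blast
  have f_one: "f \<one> = {}" using hom[of \<one> \<one>] by auto
  have f_inv: "f (inv x) = f x" if "x \<in> carrier G" for x
    using hom[of "inv x" x] that f_one by auto
  have "f h \<subseteq> (\<Union>s\<in>S. f s)" if "h \<in> generate G S" for h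
    using that
  proof (induction rule: generate.induct)
    case (eng h1 h2)
    then show ?case using hom S(3) by auto
  qed (use f_one f_inv S(2) in auto)
  then have "(\<Union>x\<in>carrier G. f x) \<subseteq> (\<Union>s\<in>S. f s)" using S(3) by blast
  moreover have "finite (\<Union>s\<in>S. f s)" using S(1,2) finite_values by blast
  ultimately show False using infinite_union finite_subset by blast
qed

section \<open>Stack reduction\<close>

datatype letter = P | Q | A

instance letter :: countable by countable_datatype

(* A stack lists the letters read so far, last letter first. relator n is the stack of
   P A^n Q P A^n, so pushing Q onto it completes the relator (P A^n Q)^2, which cancels. *)
definition relator :: "nat \<Rightarrow> letter list" where
  "relator n = replicate n A @ [P, Q] @ replicate n A @ [P]"

definition leading_As :: "letter list \<Rightarrow> nat" where
  "leading_As s = length (takeWhile (\<lambda>x. x = A) s)"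

definition push :: "letter list \<Rightarrow> letter \<Rightarrow> letter list" where
  "push s x = (if x = Q \<and> (\<exists>n t. s = relator n @ t) then drop (2 * leading_As s + 3) s else x # s)"

lemma length_relator [simp]: "length (relator n) = 2 * n + 3"
  by (simp add: relator_def)

lemma leading_As_replicate: "leading_As (replicate n A @ P # s) = n"
  unfolding leading_As_def by (induction n) auto

lemma leading_As_relator: "leading_As (relator n @ t) = n"
  using leading_As_replicate[of n "Q # replicate n A @ P # t"] by (simp add: relator_def)

lemma push_relator: "push (relator n @ t) Q = t"
  unfolding push_def leading_As_relator by auto

lemma push_eq_Cons: "\<not> (x = Q \<and> (\<exists>n t. s = relator n @ t)) \<Longrightarrow> push s x = x # s"
  unfolding push_def by auto

lemma push_A [simp]: "push s A = A # s" and push_P [simp]: "push s P = P # s"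
  by (simp_all add: push_def)

lemma foldl_push_replicate_A: "foldl push s (replicate n A) = replicate n A @ s"
  by (induction n arbitrary: s) (auto simp: replicate_append_same[symmetric])

lemma relator_prefix_iff:
  "(\<exists>m t. replicate n A @ P # s = relator m @ t) \<longleftrightarrow> (\<exists>t. s = Q # replicate n A @ P # t)"
proof
  assume "\<exists>m t. replicate n A @ P # s = relator m @ t"
  then obtain m t where e: "replicate n A @ P # s = relator m @ t" by blast
  then have "m = n" by (metis leading_As_replicate leading_As_relator)
  then show "\<exists>t. s = Q # replicate n A @ P # t" using e by (auto simp: relator_def)
next
  assume "\<exists>t. s = Q # replicate n A @ P # t"
  then show "\<exists>m t. replicate n A @ P # s = relator m @ t" by (auto simp: relator_def)
qed

definition reduced :: "letter list \<Rightarrow> bool" where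
  "reduced s \<longleftrightarrow> (\<forall>k n r. drop k s \<noteq> Q # relator n @ r)"

lemma reduced_Nil [simp]: "reduced []"
  by (simp add: reduced_def)

lemma reduced_Cons_iff: "reduced (x # s) \<longleftrightarrow> reduced s \<and> (\<forall>n r. x # s \<noteq> Q # relator n @ r)"
  unfolding reduced_def
proof safe
  fix k n r assume "\<forall>k n r. drop k (x # s) \<noteq> Q # relator n @ r" "drop k s = Q # relator n @ r"
  then show False by (metis drop_Suc_Cons)
next
  fix k n r assume "\<forall>n r. x # s \<noteq> Q # relator n @ r" "\<forall>k n r. drop k s \<noteq> Q # relator n @ r"
    "drop k (x # s) = Q # relator n @ r"
  then show False by (cases k) auto
qed (metis drop0)

lemma reduced_drop: "reduced s \<Longrightarrow> reduced (drop k s)"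
  unfolding reduced_def by (simp add: add.commute)

lemma reduced_take: "reduced s \<Longrightarrow> reduced (take k s)"
  unfolding reduced_def
proof (intro allI notI)
  fix j n r assume s: "\<forall>k n r. drop k s \<noteq> Q # relator n @ r" and jk: "drop j (take k s) = Q # relator n @ r"
  have "j \<le> k"
  proof (rule ccontr)
    assume "\<not> j \<le> k"
    then have "drop j (take k s) = []" by simp
    with jk show False by simp
  qed
  then have "drop j s = drop j (take k s) @ drop k s"
    by (metis append_take_drop_id drop_drop drop_take le_add_diff_inverse2)
  with s jk show False by simp
qed

lemma reduced_push: "reduced s \<Longrightarrow> reduced (push s x)"
  by (cases "x = Q \<and> (\<exists>n t. s = relator n @ t)")
    (auto simp: push_def reduced_drop reduced_Cons_iff)

lemma reduced_foldl_push: "reduced s \<Longrightarrow> reduced (foldl push s w)"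
  by (induction w arbitrary: s) (auto simp: reduced_push)

lemma push_reduced: "reduced (x # s) \<Longrightarrow> push s x = x # s"
  by (auto simp: reduced_Cons_iff intro: push_eq_Cons)

lemma foldl_push_reduced: "reduced (rev w @ s) \<Longrightarrow> foldl push s w = rev w @ s"
proof (induction w arbitrary: s)
  case (Cons x w)
  have "reduced (x # s)" using Cons.prems reduced_drop[of "rev w @ x # s" "length w"] by simp
  then show ?case using Cons by (simp add: push_reduced)
qed simp

lemma foldl_push_Nil_rev: "reduced s \<Longrightarrow> foldl push [] (rev s) = s"
  using foldl_push_reduced[of "rev s" "[]"] by simp

lemma rev_Q_relator: "rev (Q # relator n) = P # replicate n A @ Q # P # replicate n A @ [Q]"
  by (simp add: relator_def)

(* If the word of s ends in P A^n Q, the first Q of the relator cancels against it and the rest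
   of the relator rebuilds s; otherwise the relator is pushed whole and its last Q cancels it. *)
lemma foldl_push_relator:
  assumes s: "reduced s"
  shows "foldl push s (rev (Q # relator n)) = s"
proof (cases "\<exists>t. s = Q # replicate n A @ P # t")
  case True
  then obtain t where t: "s = Q # replicate n A @ P # t" by blast
  have "\<not> (\<exists>t'. t = Q # replicate n A @ P # t')"
    using s unfolding t by (auto simp: reduced_Cons_iff relator_def)
  then have "push (replicate n A @ P # t) Q = Q # replicate n A @ P # t"
    using relator_prefix_iff push_eq_Cons by blast
  moreover have "push (replicate n A @ P # s) Q = t"
    using push_relator[of n t] by (simp add: t relator_def)
  ultimately show ?thesis
    unfolding rev_Q_relator by (simp add: foldl_push_replicate_A t)
next
  case False
  then have "push (replicate n A @ P # s) Q = Q # replicate n A @ P # s"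
    using relator_prefix_iff push_eq_Cons by blast
  then show ?thesis
    using push_relator[of n s] unfolding rev_Q_relator by (simp add: foldl_push_replicate_A relator_def)
qed

lemma foldl_push_rev_push:
  assumes "reduced s"
  shows "foldl push s (rev (push t x)) = push (foldl push s (rev t)) x"
proof (cases "x = Q \<and> (\<exists>n r. t = relator n @ r)")
  case True
  then obtain n r where "t = relator n @ r" "x = Q" by blast
  then show ?thesis
    using foldl_push_relator[OF reduced_foldl_push[OF assms]] by (simp add: push_relator)
qed (simp add: push_eq_Cons)

lemma foldl_push_rev_foldl:
  "reduced s \<Longrightarrow> foldl push s (rev (foldl push t w)) = foldl push s (rev t @ w)"
  by (induction w rule: rev_induct) (simp_all add: foldl_push_rev_push)

(* Elements are reduced stacks, coded as natural numbers to fit the required carrier type;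
   the product pushes the word of the second factor onto the stack of the first. *)
definition Mon :: "nat monoid" where
  "Mon = \<lparr>carrier = to_nat ` {s :: letter list. reduced s},
          mult = (\<lambda>x y. to_nat (foldl push (from_nat x :: letter list) (rev (from_nat y)))),
          one = to_nat ([] :: letter list)\<rparr>"

lemma carrier_Mon: "carrier Mon = to_nat ` {s :: letter list. reduced s}"
  by (simp add: Mon_def)

lemma one_Mon: "\<one>\<^bsub>Mon\<^esub> = to_nat ([] :: letter list)"
  by (simp add: Mon_def)

lemma mult_Mon: "x \<otimes>\<^bsub>Mon\<^esub> y = to_nat (foldl push (from_nat x :: letter list) (rev (from_nat y)))"
  by (simp add: Mon_def)

lemma mult_Mon_to_nat: "to_nat (s :: letter list) \<otimes>\<^bsub>Mon\<^esub> to_nat t = to_nat (foldl push s (rev t))"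
  by (simp add: mult_Mon)

lemma monoid_Mon: "monoid Mon"
proof
  fix x y assume "x \<in> carrier Mon" "y \<in> carrier Mon"
  then show "x \<otimes>\<^bsub>Mon\<^esub> y \<in> carrier Mon"
    by (auto simp: carrier_Mon mult_Mon intro!: reduced_foldl_push)
next
  fix x y z assume "x \<in> carrier Mon" "y \<in> carrier Mon" "z \<in> carrier Mon"
  then show "x \<otimes>\<^bsub>Mon\<^esub> y \<otimes>\<^bsub>Mon\<^esub> z = x \<otimes>\<^bsub>Mon\<^esub> (y \<otimes>\<^bsub>Mon\<^esub> z)"
    by (auto simp: carrier_Mon mult_Mon_to_nat foldl_push_rev_foldl)
next
  fix x assume "x \<in> carrier Mon"
  then show "\<one>\<^bsub>Mon\<^esub> \<otimes>\<^bsub>Mon\<^esub> x = x" "x \<otimes>\<^bsub>Mon\<^esub> \<one>\<^bsub>Mon\<^esub> = x"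
    by (auto simp: carrier_Mon one_Mon mult_Mon_to_nat foldl_push_Nil_rev)
qed (simp add: carrier_Mon one_Mon)

definition generator :: "letter \<Rightarrow> nat" where
  "generator c = to_nat [c]"

lemma reduced_singleton: "reduced [x]"
  by (simp add: reduced_Cons_iff relator_def)

lemma generator_carrier: "generator c \<in> carrier Mon"
  by (simp add: generator_def carrier_Mon reduced_singleton)

lemma eval_word_generators: "eval_word Mon (map generator w) = to_nat (foldl push [] w)"
proof (induction w)
  case (Cons x w)
  have "eval_word Mon (map generator (x # w)) = generator x \<otimes>\<^bsub>Mon\<^esub> to_nat (foldl push [] w)"
    using Cons.IH by (simp add: eval_word_def)
  also have "\<dots> = to_nat (foldl push [x] w)"
    using foldl_push_rev_foldl[OF reduced_singleton, of x "[]" w]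
    by (simp add: generator_def mult_Mon_to_nat)
  finally show ?case
    using push_reduced[OF reduced_singleton, of x] by simp
qed (simp add: eval_word_def one_Mon)

lemma eval_word_generators_rev: "reduced s \<Longrightarrow> eval_word Mon (map generator (rev s)) = to_nat s"
  by (simp add: eval_word_generators foldl_push_Nil_rev)

section \<open>The word problem is context-free\<close>

(* relator_core w says that w equals A^n Q P A^n, so that P w Q is a relator with trivial
   words inserted. *)
inductive trivial_word and relator_core where
  trivial_Nil: "trivial_word []"
| trivial_append: "trivial_word u \<Longrightarrow> trivial_word v \<Longrightarrow> trivial_word (u @ v)"
| trivial_relator: "relator_core w \<Longrightarrow> trivial_word (P # w @ [Q])"
| core_QP: "trivial_word z1 \<Longrightarrow> trivial_word z2 \<Longrightarrow> trivial_word z3 \<Longrightarrow> relator_core (z1 @ Q # z2 @ P # z3)"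
| core_A: "trivial_word z1 \<Longrightarrow> relator_core w \<Longrightarrow> trivial_word z2 \<Longrightarrow> relator_core (z1 @ A # w @ A # z2)"

lemma foldl_push_trivial_word_relator_core:
  shows "trivial_word z \<Longrightarrow> \<forall>s. reduced s \<longrightarrow> foldl push s z = s"
    and "relator_core w \<Longrightarrow> \<exists>n. \<forall>s. reduced s \<longrightarrow>
           foldl push s w = foldl push s (replicate n A @ Q # P # replicate n A)"
proof (induction rule: trivial_word_relator_core.inducts)
  case (trivial_append u v)
  then show ?case using reduced_foldl_push by simp
next
  case (trivial_relator w)
  then obtain n where n: "\<And>s. reduced s \<Longrightarrow>
      foldl push s w = foldl push s (replicate n A @ Q # P # replicate n A)" by blast
  show ?case
  proof (intro allI impI)
    fix s :: "letter list" assume s: "reduced s"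
    have "foldl push s (P # w @ [Q]) = foldl push s (rev (Q # relator n))"
      using n[OF reduced_push[OF s, of P]] unfolding rev_Q_relator by simp
    then show "foldl push s (P # w @ [Q]) = s" using foldl_push_relator[OF s] by simp
  qed
next
  case (core_QP z1 z2 z3)
  show ?case
  proof (intro exI[of _ 0] allI impI)
    fix s :: "letter list" assume s: "reduced s"
    have "reduced (push (push s Q) P)" by (intro reduced_push s)
    then show "foldl push s (z1 @ Q # z2 @ P # z3) = foldl push s (replicate 0 A @ Q # P # replicate 0 A)"
      using core_QP s by (simp add: reduced_push)
  qed
next
  case (core_A z1 w z2)
  then obtain n where n: "\<And>s. reduced s \<Longrightarrow>
      foldl push s w = foldl push s (replicate n A @ Q # P # replicate n A)" by blast
  show ?case
  proof (intro exI[of _ "Suc n"] allI impI)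
    fix s :: "letter list" assume s: "reduced s"
    have s1: "reduced (push s A)" using reduced_push[OF s] .
    have s2: "reduced (push (foldl push (push s A) w) A)" by (intro reduced_push reduced_foldl_push s1)
    have "foldl push s (z1 @ A # w @ A # z2) = push (foldl push (push s A) w) A"
      using core_A.IH s s1 s2 by (simp add: reduced_foldl_push)
    also have "\<dots> = foldl push s (A # (replicate n A @ Q # P # replicate n A) @ [A])"
      using n[OF s1] by simp
    finally show "foldl push s (z1 @ A # w @ A # z2) = foldl push s (replicate (Suc n) A @ Q # P # replicate (Suc n) A)"
      by (simp add: replicate_append_same)
  qed
qed simp_all

lemma foldl_push_trivial_word: "trivial_word z \<Longrightarrow> reduced s \<Longrightarrow> foldl push s z = s"
  using foldl_push_trivial_word_relator_core(1) by blast

inductive reduces_to :: "letter list \<Rightarrow> letter list \<Rightarrow> bool" where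
  reduces_to_Nil: "trivial_word z \<Longrightarrow> reduces_to z []"
| reduces_to_snoc: "reduces_to U cs \<Longrightarrow> trivial_word z \<Longrightarrow> reduces_to (U @ c # z) (cs @ [c])"

lemma reduces_to_NilE: "reduces_to U [] \<Longrightarrow> trivial_word U"
  by (cases rule: reduces_to.cases) auto

lemma reduces_to_snocE:
  "reduces_to U (cs @ [c]) \<Longrightarrow> \<exists>U' z. U = U' @ c # z \<and> reduces_to U' cs \<and> trivial_word z"
  by (cases rule: reduces_to.cases) auto

lemma reduces_to_appendE:
  "reduces_to U (cs1 @ c # cs2) \<Longrightarrow> \<exists>U1 U2. U = U1 @ c # U2 \<and> reduces_to U1 cs1 \<and> reduces_to U2 cs2"
proof (induction cs2 arbitrary: U rule: rev_induct)
  case Nil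
  then show ?case using reduces_to_snocE[of U cs1 c] reduces_to_Nil by blast
next
  case (snoc d cs2)
  then obtain U' z where U: "U = U' @ d # z" "reduces_to U' (cs1 @ c # cs2)" "trivial_word z"
    using reduces_to_snocE[of U "cs1 @ c # cs2" d] by auto
  then obtain U1 U2 where "U' = U1 @ c # U2" "reduces_to U1 cs1" "reduces_to U2 cs2"
    using snoc.IH by blast
  then show ?case using U reduces_to_snoc[of U2 cs2 z d] by auto
qed

lemma reduces_to_ConsE:
  "reduces_to U (c # cs) \<Longrightarrow> \<exists>z U'. U = z @ c # U' \<and> trivial_word z \<and> reduces_to U' cs"
  using reduces_to_appendE[of U "[]" c cs] reduces_to_NilE by auto

lemma reduces_to_append_trivial: "reduces_to U cs \<Longrightarrow> trivial_word z \<Longrightarrow> reduces_to (U @ z) cs"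
  by (induction rule: reduces_to.induct) (auto intro: reduces_to.intros trivial_append)

lemma reduces_to_Cons: "reduces_to U cs \<Longrightarrow> trivial_word z \<Longrightarrow> reduces_to (z @ c # U) (c # cs)"
proof (induction rule: reduces_to.induct)
  case (reduces_to_Nil z')
  then show ?case using reduces_to_snoc[OF reduces_to.reduces_to_Nil] by fastforce
next
  case (reduces_to_snoc U cs z' d)
  then show ?case using reduces_to.reduces_to_snoc by fastforce
qed

lemma relator_core_if_reduces_to:
  "reduces_to V (replicate n A @ Q # P # replicate n A) \<Longrightarrow> relator_core V"
proof (induction n arbitrary: V)
  case 0
  then obtain z1 V' where V: "V = z1 @ Q # V'" "trivial_word z1" "reduces_to V' [P]"
    using reduces_to_ConsE[of V Q "[P]"] by auto
  then obtain z2 z3 where "V' = z2 @ P # z3" "trivial_word z2" "trivial_word z3"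
    using reduces_to_ConsE[of V' P "[]"] reduces_to_NilE by blast
  then show ?case using V core_QP by auto
next
  case (Suc n)
  have word: "replicate (Suc n) A @ Q # P # replicate (Suc n) A
      = A # (replicate n A @ Q # P # replicate n A) @ [A]"
    by (simp add: replicate_append_same[symmetric])
  obtain z1 V' where V: "V = z1 @ A # V'" "trivial_word z1"
      "reduces_to V' ((replicate n A @ Q # P # replicate n A) @ [A])"
    using reduces_to_ConsE[of V A] Suc.prems unfolding word by blast
  then obtain V'' z2 where "V' = V'' @ A # z2" "reduces_to V'' (replicate n A @ Q # P # replicate n A)"
      "trivial_word z2"
    using reduces_to_snocE by blast
  then show ?case using V Suc.IH core_A by auto
qed

lemma reduces_to_normal_form: "reduces_to U (rev (foldl push [] U))"
proof (induction U rule: rev_induct)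
  case Nil
  then show ?case using reduces_to_Nil trivial_Nil by auto
next
  case (snoc x U)
  show ?case
  proof (cases "x = Q \<and> (\<exists>n t. foldl push [] U = relator n @ t)")
    case True
    then obtain n t where U: "foldl push [] U = relator n @ t" and x: "x = Q" by blast
    have "rev (foldl push [] U) = rev t @ P # (replicate n A @ Q # P # replicate n A)"
      unfolding U relator_def by simp
    then obtain U1 V where UV: "U = U1 @ P # V" "reduces_to U1 (rev t)"
        "reduces_to V (replicate n A @ Q # P # replicate n A)"
      using reduces_to_appendE snoc.IH by metis
    have "trivial_word (P # V @ [Q])"
      using relator_core_if_reduces_to[OF UV(3)] trivial_relator by blast
    then have "reduces_to (U1 @ P # V @ [Q]) (rev t)"
      using reduces_to_append_trivial[OF UV(2)] by simp
    then show ?thesis using U x UV push_relator by simp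
  next
    case False
    then show ?thesis
      using push_eq_Cons[OF False] reduces_to_snoc[OF snoc.IH trivial_Nil, of x] by simp
  qed
qed

lemma foldl_push_reduces_to: "reduces_to U cs \<Longrightarrow> reduced s \<Longrightarrow> foldl push s U = foldl push s cs"
  by (induction arbitrary: s rule: reduces_to.induct)
    (simp_all add: foldl_push_trivial_word reduced_push reduced_foldl_push)

lemma foldl_push_Nil_eq_iff:
  "foldl push [] U = foldl push [] V \<longleftrightarrow> (\<exists>cs. reduces_to U cs \<and> reduces_to V cs)"
  by (metis reduces_to_normal_form foldl_push_reduces_to reduced_Nil)

abbreviation Tm :: "letter \<Rightarrow> nat + letter option" where
  "Tm c \<equiv> Inr (Some c)"

definition wp_grammar :: "(nat \<times> (nat + letter option) list) set" where
  "wp_grammar =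
    {(0, [Inl 1, Tm P, Inl 0, Tm P, Inl 3]), (0, [Inl 1, Tm Q, Inl 0, Tm Q, Inl 3]),
     (0, [Inl 1, Tm A, Inl 0, Tm A, Inl 3]), (0, [Inl 1, Inr None, Inl 3]),
     (1, []), (1, [Inl 1, Inl 1]), (1, [Tm P, Inl 2, Tm Q]),
     (2, [Inl 1, Tm Q, Inl 1, Tm P, Inl 1]), (2, [Inl 1, Tm A, Inl 2, Tm A, Inl 1]),
     (3, []), (3, [Inl 3, Inl 3]), (3, [Tm Q, Inl 4, Tm P]),
     (4, [Inl 3, Tm P, Inl 3, Tm Q, Inl 3]), (4, [Inl 3, Tm A, Inl 4, Tm A, Inl 3])}"

(* The grammar is over letters, with None as the separator; renaming letters to generators of
   Mon turns the language of nonterminal 0 into the word problem. Nonterminals 1 and 2 generate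
   the trivial words and relator cores, 3 and 4 their reversals. *)
definition wp_lang :: "nat \<Rightarrow> letter option list set" where
  "wp_lang k =
    (if k = 0 then {map Some U @ None # map Some (rev V) | U V. \<exists>cs. reduces_to U cs \<and> reduces_to V cs}
     else if k = 1 then {x. None \<notin> set x \<and> trivial_word (map the x)}
     else if k = 2 then {x. None \<notin> set x \<and> relator_core (map the x)}
     else if k = 3 then {x. None \<notin> set x \<and> trivial_word (rev (map the x))}
     else if k = 4 then {x. None \<notin> set x \<and> relator_core (rev (map the x))}
     else {})"

lemma wp_lang_0: "wp_lang 0 =
    {map Some U @ None # map Some (rev V) | U V. \<exists>cs. reduces_to U cs \<and> reduces_to V cs}"
  and wp_lang_1: "wp_lang (Suc 0) = {x. None \<notin> set x \<and> trivial_word (map the x)}"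
  and wp_lang_2: "wp_lang 2 = {x. None \<notin> set x \<and> relator_core (map the x)}"
  and wp_lang_3: "wp_lang 3 = {x. None \<notin> set x \<and> trivial_word (rev (map the x))}"
  and wp_lang_4: "wp_lang 4 = {x. None \<notin> set x \<and> relator_core (rev (map the x))}"
  by (simp_all add: wp_lang_def)

lemma map_Some_the: "None \<notin> set x \<Longrightarrow> map (Some \<circ> the) x = x"
  by (induction x) auto

lemma wp_lang_0_Cons:
  assumes "z \<in> wp_lang 1" "m \<in> wp_lang 0" "z' \<in> wp_lang 3"
  shows "z @ [Some c] @ m @ [Some c] @ z' \<in> wp_lang 0"
proof -
  obtain U V cs where m: "m = map Some U @ None # map Some (rev V)" "reduces_to U cs" "reduces_to V cs"
    using assms(2) unfolding wp_lang_0 by blast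
  let ?U = "map the z @ c # U" and ?V = "rev (map the z') @ c # V"
  have "reduces_to ?U (c # cs)" "reduces_to ?V (c # cs)"
    using assms(1,3) m by (auto simp: wp_lang_1 wp_lang_3 intro: reduces_to_Cons)
  moreover have "z @ [Some c] @ m @ [Some c] @ z' = map Some ?U @ None # map Some (rev ?V)"
    using assms(1,3) m(1) by (simp add: wp_lang_1 wp_lang_3 map_Some_the rev_map[symmetric])
  ultimately show ?thesis unfolding wp_lang_0 by blast
qed

lemma wp_lang_0_marker:
  assumes "z \<in> wp_lang 1" "z' \<in> wp_lang 3"
  shows "z @ [None] @ z' \<in> wp_lang 0"
proof -
  let ?U = "map the z" and ?V = "rev (map the z')"
  have "reduces_to ?U []" "reduces_to ?V []"
    using assms by (auto simp: wp_lang_1 wp_lang_3 intro: reduces_to_Nil)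
  moreover have "z @ [None] @ z' = map Some ?U @ None # map Some (rev ?V)"
    using assms by (simp add: wp_lang_1 wp_lang_3 map_Some_the)
  ultimately show ?thesis unfolding wp_lang_0 by blast
qed

lemma wp_grammar_sound: "(B, \<gamma>) \<in> wp_grammar \<Longrightarrow> form_lang wp_lang \<gamma> \<subseteq> wp_lang B"
  unfolding wp_grammar_def
  by (elim insertE emptyE)
    (auto simp: conc_def wp_lang_1 wp_lang_2 wp_lang_3 wp_lang_4
      intro: wp_lang_0_Cons[simplified] wp_lang_0_marker[simplified] trivial_word_relator_core.intros)

lemma finite_wp_grammar: "finite wp_grammar"
  by (simp add: wp_grammar_def)

lemma wp_grammar_derives_words:
  shows "trivial_word z \<Longrightarrow> cfg_derives wp_grammar [Inl 1] (map Inr (map Some z))"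
    and "relator_core w \<Longrightarrow> cfg_derives wp_grammar [Inl 2] (map Inr (map Some w))"
proof (induction rule: trivial_word_relator_core.inducts)
  case trivial_Nil
  show ?case
    by (rule cfg_derives_by_production[of 1 "[]" _ "[]"]) (simp_all add: wp_grammar_def)
next
  case (trivial_append u v)
  show ?case
    by (rule cfg_derives_by_production[of 1 "[Inl 1, Inl 1]" _ "[map Inr (map Some u), map Inr (map Some v)]"])
      (use trivial_append in \<open>simp_all add: wp_grammar_def\<close>)
next
  case (trivial_relator w)
  show ?case
    by (rule cfg_derives_by_production[of 1 "[Tm P, Inl 2, Tm Q]" _
          "[[Tm P], map Inr (map Some w), [Tm Q]]"])
      (use trivial_relator in \<open>simp_all add: wp_grammar_def cfg_derives.refl\<close>)
next
  case (core_QP z1 z2 z3)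
  show ?case
    by (rule cfg_derives_by_production[of 2 "[Inl 1, Tm Q, Inl 1, Tm P, Inl 1]" _
          "[map Inr (map Some z1), [Tm Q], map Inr (map Some z2), [Tm P], map Inr (map Some z3)]"])
      (use core_QP in \<open>simp_all add: wp_grammar_def cfg_derives.refl\<close>)
next
  case (core_A z1 w z2)
  show ?case
    by (rule cfg_derives_by_production[of 2 "[Inl 1, Tm A, Inl 2, Tm A, Inl 1]" _
          "[map Inr (map Some z1), [Tm A], map Inr (map Some w), [Tm A], map Inr (map Some z2)]"])
      (use core_A in \<open>simp_all add: wp_grammar_def cfg_derives.refl\<close>)
qed

lemma wp_grammar_derives_reversed_words:
  shows "trivial_word z \<Longrightarrow> cfg_derives wp_grammar [Inl 3] (map Inr (map Some (rev z)))"
    and "relator_core w \<Longrightarrow> cfg_derives wp_grammar [Inl 4] (map Inr (map Some (rev w)))"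
proof (induction rule: trivial_word_relator_core.inducts)
  case trivial_Nil
  show ?case
    by (rule cfg_derives_by_production[of 3 "[]" _ "[]"]) (simp_all add: wp_grammar_def)
next
  case (trivial_append u v)
  show ?case
    by (rule cfg_derives_by_production[of 3 "[Inl 3, Inl 3]" _
          "[map Inr (map Some (rev v)), map Inr (map Some (rev u))]"])
      (use trivial_append in \<open>simp_all add: wp_grammar_def\<close>)
next
  case (trivial_relator w)
  show ?case
    by (rule cfg_derives_by_production[of 3 "[Tm Q, Inl 4, Tm P]" _
          "[[Tm Q], map Inr (map Some (rev w)), [Tm P]]"])
      (use trivial_relator in \<open>simp_all add: wp_grammar_def cfg_derives.refl\<close>)
next
  case (core_QP z1 z2 z3)
  show ?case
    by (rule cfg_derives_by_production[of 4 "[Inl 3, Tm P, Inl 3, Tm Q, Inl 3]" _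
          "[map Inr (map Some (rev z3)), [Tm P], map Inr (map Some (rev z2)), [Tm Q],
            map Inr (map Some (rev z1))]"])
      (use core_QP in \<open>simp_all add: wp_grammar_def cfg_derives.refl\<close>)
next
  case (core_A z1 w z2)
  show ?case
    by (rule cfg_derives_by_production[of 4 "[Inl 3, Tm A, Inl 4, Tm A, Inl 3]" _
          "[map Inr (map Some (rev z2)), [Tm A], map Inr (map Some (rev w)), [Tm A],
            map Inr (map Some (rev z1))]"])
      (use core_A in \<open>simp_all add: wp_grammar_def cfg_derives.refl\<close>)
qed

lemma wp_grammar_derives_reduces_to:
  "reduces_to U cs \<Longrightarrow> reduces_to V cs \<Longrightarrow>
     cfg_derives wp_grammar [Inl 0] (map Inr (map Some U @ None # map Some (rev V)))"
proof (induction cs arbitrary: U V)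
  case Nil
  then have "trivial_word U" "trivial_word V" using reduces_to_NilE by auto
  then have "cfg_derives wp_grammar [Inl 1] (map Inr (map Some U))"
      "cfg_derives wp_grammar [Inl 3] (map Inr (map Some (rev V)))"
    using wp_grammar_derives_words(1) wp_grammar_derives_reversed_words(1) by blast+
  then show ?case
    by (intro cfg_derives_by_production[of 0 "[Inl 1, Inr None, Inl 3]" _
          "[map Inr (map Some U), [Inr None], map Inr (map Some (rev V))]"])
      (simp_all add: wp_grammar_def cfg_derives.refl)
next
  case (Cons c cs)
  obtain z U' z' V' where UV: "U = z @ c # U'" "trivial_word z" "reduces_to U' cs"
      "V = z' @ c # V'" "trivial_word z'" "reduces_to V' cs"
    using reduces_to_ConsE[OF Cons.prems(1)] reduces_to_ConsE[OF Cons.prems(2)] by blast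
  have "(0, [Inl 1, Tm c, Inl 0, Tm c, Inl 3]) \<in> wp_grammar"
    by (cases c) (simp_all add: wp_grammar_def)
  moreover have "cfg_derives wp_grammar [Inl 1] (map Inr (map Some z))"
      "cfg_derives wp_grammar [Inl 3] (map Inr (map Some (rev z')))"
    using wp_grammar_derives_words(1) wp_grammar_derives_reversed_words(1) UV by blast+
  moreover have "cfg_derives wp_grammar [Inl 0] (map Inr (map Some U' @ None # map Some (rev V')))"
    using Cons.IH UV by blast
  ultimately show ?case
    unfolding UV(1,4)
    by (intro cfg_derives_by_production[of 0 "[Inl 1, Tm c, Inl 0, Tm c, Inl 3]" _
          "[map Inr (map Some z), [Tm c], map Inr (map Some U' @ None # map Some (rev V')),
            [Tm c], map Inr (map Some (rev z'))]"])
      (simp_all add: cfg_derives.refl)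
qed

lemma wp_lang_0_eq_derivable: "wp_lang 0 = {w. cfg_derives wp_grammar [Inl 0] (map Inr w)}"
proof safe
  fix w assume "w \<in> wp_lang 0"
  then show "cfg_derives wp_grammar [Inl 0] (map Inr w)"
    unfolding wp_lang_0 using wp_grammar_derives_reduces_to by blast
next
  fix w assume "cfg_derives wp_grammar [Inl 0] (map Inr w)"
  then have "form_lang wp_lang (map Inr w) \<subseteq> form_lang wp_lang [Inl 0]"
    using cfg_derives_sound[OF wp_grammar_sound] by blast
  then show "w \<in> wp_lang 0" by simp
qed

lemma finite_range_generator: "finite (range generator)"
proof -
  have "(UNIV :: letter set) = {P, Q, A}" using letter.exhaust by auto
  then show ?thesis by (metis finite.emptyI finite.insertI finite_imageI)
qed

lemma eval_word_generators_eq_iff: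
  "eval_word Mon (map generator U) = eval_word Mon (map generator V) \<longleftrightarrow>
     (\<exists>cs. reduces_to U cs \<and> reduces_to V cs)"
  by (simp add: eval_word_generators foldl_push_Nil_eq_iff)

lemma word_problem_Mon: "word_problem Mon (range generator) = map (map_option generator) ` wp_lang 0"
proof safe
  fix x assume "x \<in> word_problem Mon (range generator)"
  then obtain u v where x: "x = map Some u @ [None] @ rev (map Some v)" "set u \<subseteq> range generator"
      "set v \<subseteq> range generator" "eval_word Mon u = eval_word Mon v"
    unfolding word_problem_def by blast
  then obtain U V where UV: "u = map generator U" "v = map generator V"
    by (metis ex_map_conv rangeE subsetD)
  then have "\<exists>cs. reduces_to U cs \<and> reduces_to V cs"
    using x(4) eval_word_generators_eq_iff by simp
  then have "map Some U @ None # map Some (rev V) \<in> wp_lang 0"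
    unfolding wp_lang_0 by blast
  moreover have "x = map (map_option generator) (map Some U @ None # map Some (rev V))"
    using x(1) UV by (simp add: rev_map)
  ultimately show "x \<in> map (map_option generator) ` wp_lang 0" by blast
next
  fix y assume "y \<in> wp_lang 0"
  then obtain U V where "y = map Some U @ None # map Some (rev V)" "\<exists>cs. reduces_to U cs \<and> reduces_to V cs"
    unfolding wp_lang_0 by blast
  then have "map (map_option generator) y = map Some (map generator U) @ [None] @ rev (map Some (map generator V))"
      "eval_word Mon (map generator U) = eval_word Mon (map generator V)"
    by (simp_all add: rev_map eval_word_generators_eq_iff)
  then show "map (map_option generator) y \<in> word_problem Mon (range generator)"
    unfolding word_problem_def by fastforce
qed

lemma Mon_generated:
  assumes "x \<in> carrier Mon"
  shows "\<exists>w. set w \<subseteq> range generator \<and> eval_word Mon w = x"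
proof -
  obtain s where "x = to_nat s" "reduced s" using assms by (auto simp: carrier_Mon)
  then have "eval_word Mon (map generator (rev s)) = x" by (simp add: eval_word_generators_rev)
  moreover have "set (map generator (rev s)) \<subseteq> range generator" by auto
  ultimately show ?thesis by blast
qed

lemma context_free_monoid_Mon: "context_free_monoid Mon"
  unfolding context_free_monoid_def
proof (intro conjI exI)
  show "monoid Mon" by (rule monoid_Mon)
  show "finite (range generator)" by (rule finite_range_generator)
  show "range generator \<subseteq> carrier Mon" using generator_carrier by blast
  show "\<forall>x\<in>carrier Mon. \<exists>w. set w \<subseteq> range generator \<and> eval_word Mon w = x"
    using Mon_generated by blast
  have "context_free (wp_lang 0)"
    unfolding context_free_def wp_lang_0_eq_derivable using finite_wp_grammar by blast
  then show "context_free (word_problem Mon (range generator))"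
    unfolding word_problem_Mon by (rule context_free_image_map)
qed

section \<open>Maximal subgroups are not finitely generated\<close>

(* A pushdown machine: P opens a counter, A increments the innermost open counter, and Q closes
   it, toggling its value in a parity set. The relator (P A^n Q)^2 toggles n twice, so this is
   an action of the monoid, in which the unit P A^n Q toggles n. *)
fun count_step :: "letter \<Rightarrow> nat list \<times> nat set \<Rightarrow> nat list \<times> nat set" where
  "count_step P (cs, g) = (0 # cs, g)"
| "count_step A ([], g) = ([], g)"
| "count_step A (c # cs, g) = (Suc c # cs, g)"
| "count_step Q ([], g) = ([], g)"
| "count_step Q (c # cs, g) = (cs, sym_diff g {c})"

definition count_run :: "letter list \<Rightarrow> nat list \<times> nat set \<Rightarrow> nat list \<times> nat set" where
  "count_run w x = foldl (\<lambda>x c. count_step c x) x w"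

lemma count_run_Nil [simp]: "count_run [] x = x"
  and count_run_Cons [simp]: "count_run (c # w) x = count_run w (count_step c x)"
  and count_run_append: "count_run (u @ v) x = count_run v (count_run u x)"
  by (simp_all add: count_run_def)

lemma count_run_replicate_A: "count_run (replicate n A) (c # cs, g) = ((c + n) # cs, g)"
  by (induction n arbitrary: c) auto

lemma count_run_relator: "count_run (rev (Q # relator n)) x = x"
proof -
  obtain cs g where "x = (cs, g)" by force
  then show ?thesis unfolding rev_Q_relator
    by (simp add: count_run_append count_run_replicate_A) blast
qed

lemma count_run_rev_foldl_push: "count_run (rev (foldl push s w)) x = count_run (rev s @ w) x"
proof (induction w arbitrary: x rule: rev_induct)
  case (snoc c w)
  have "count_run (rev (push (foldl push s w) c)) x = count_run (rev (foldl push s w) @ [c]) x"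
  proof (cases "c = Q \<and> (\<exists>n t. foldl push s w = relator n @ t)")
    case True
    then obtain n t where "foldl push s w = relator n @ t" "c = Q" by blast
    then show ?thesis
      using count_run_relator[of n "count_run (rev t) x"] by (simp add: push_relator count_run_append)
  qed (simp add: push_eq_Cons)
  then show ?case using snoc by (simp add: count_run_append)
qed simp

lemma count_run_sym_diff:
  "count_run w (cs, g) = (fst (count_run w (cs, {})), sym_diff g (snd (count_run w (cs, {}))))"
proof (induction w arbitrary: cs g)
  case (Cons c w)
  obtain cs' d where step: "count_step c (cs, {}) = (cs', d)" by force
  then have "count_step c (cs, g) = (cs', sym_diff g d)"
    by (cases c; cases cs) auto
  then show ?case using Cons[of cs' "sym_diff g d"] Cons[of cs' d] step by auto
qed simp

lemma length_count_run_mono: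
  "length cs' \<le> length cs \<Longrightarrow> length (fst (count_run w (cs', g'))) \<le> length (fst (count_run w (cs, g)))"
proof (induction w arbitrary: cs cs' g g')
  case (Cons c w)
  obtain cs1 g1 cs1' g1' where "count_step c (cs, g) = (cs1, g1)" "count_step c (cs', g') = (cs1', g1')"
    by force
  moreover from this have "length cs1' \<le> length cs1"
    using Cons.prems by (cases c; cases cs; cases cs') auto
  ultimately show ?case using Cons.IH by simp
qed simp

lemma finite_count_run: "finite g \<Longrightarrow> finite (snd (count_run w (cs, g)))"
proof (induction w arbitrary: cs g)
  case (Cons c w)
  obtain cs' g' where "count_step c (cs, g) = (cs', g')" by force
  moreover from this have "finite g'" using Cons.prems by (cases c; cases cs) auto
  ultimately show ?case using Cons.IH by simp
qed simp

definition Mon_act :: "nat \<Rightarrow> nat list \<times> nat set \<Rightarrow> nat list \<times> nat set" where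
  "Mon_act m = count_run (rev (from_nat m :: letter list))"

lemma Mon_act_mult: "Mon_act (x \<otimes>\<^bsub>Mon\<^esub> y) = Mon_act y \<circ> Mon_act x"
  by (auto simp: Mon_act_def mult_Mon count_run_rev_foldl_push count_run_append)

lemma Mon_act_one: "Mon_act \<one>\<^bsub>Mon\<^esub> = id"
  by (auto simp: Mon_act_def one_Mon)

definition open_counters :: "nat \<Rightarrow> nat list" where
  "open_counters m = fst (Mon_act m ([], {}))"

definition parity :: "nat \<Rightarrow> nat set" where
  "parity m = snd (Mon_act m ([], {}))"

lemma finite_parity: "finite (parity m)"
  unfolding parity_def Mon_act_def by (rule finite_count_run) simp

lemma open_counters_eq_Nil_if_left_invertible:
  assumes "y \<otimes>\<^bsub>Mon\<^esub> u = \<one>\<^bsub>Mon\<^esub>"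
  shows "open_counters u = []"
proof -
  obtain cs g where y: "Mon_act y ([], {}) = (cs, g)" by force
  have "Mon_act u (cs, g) = ([], {})"
    using arg_cong[OF assms, of "\<lambda>m. Mon_act m ([], {})"] y by (simp add: Mon_act_mult Mon_act_one)
  moreover have "length (open_counters u) \<le> length (fst (Mon_act u (cs, g)))"
    unfolding open_counters_def Mon_act_def by (rule length_count_run_mono) simp
  ultimately show ?thesis by simp
qed

lemma parity_mult:
  assumes "open_counters u = []"
  shows "parity (u \<otimes>\<^bsub>Mon\<^esub> v) = sym_diff (parity u) (parity v)"
proof -
  have "Mon_act u ([], {}) = ([], parity u)"
    using assms unfolding open_counters_def parity_def by (metis prod.collapse)
  then have "Mon_act (u \<otimes>\<^bsub>Mon\<^esub> v) ([], {}) = Mon_act v ([], parity u)"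
    by (simp add: Mon_act_mult)
  also have "\<dots> = (open_counters v, sym_diff (parity u) (parity v))"
    unfolding Mon_act_def open_counters_def parity_def by (rule count_run_sym_diff)
  finally show ?thesis unfolding parity_def by simp
qed

(* The unit P A^n Q, written as a stack. *)
definition involution :: "nat \<Rightarrow> nat" where
  "involution n = to_nat (Q # replicate n A @ [P])"

lemma reduced_if_Q_notin_set: "Q \<notin> set s \<Longrightarrow> reduced s"
  unfolding reduced_def by (metis in_set_dropD list.set_intros(1))

lemma reduced_involution: "reduced (Q # replicate n A @ [P])"
proof -
  have "Q \<in> set (relator m @ r)" "Q \<notin> set (replicate n A @ [P])" for m r
    by (simp_all add: relator_def)
  then have "replicate n A @ [P] \<noteq> relator m @ r" for m r by metis
  then show ?thesis by (auto simp: reduced_Cons_iff intro: reduced_if_Q_notin_set)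
qed

lemma involution_carrier: "involution n \<in> carrier Mon"
  using reduced_involution by (simp add: involution_def carrier_Mon)

lemma involution_squared: "involution n \<otimes>\<^bsub>Mon\<^esub> involution n = \<one>\<^bsub>Mon\<^esub>"
proof -
  have "foldl push (Q # replicate n A @ [P]) (rev (Q # replicate n A @ [P])) = []"
    using push_relator[of n "[]"] by (simp add: foldl_push_replicate_A relator_def)
  then show ?thesis by (simp add: involution_def mult_Mon_to_nat one_Mon)
qed

lemma involution_Units: "involution n \<in> Units Mon"
  using involution_carrier involution_squared unfolding Units_def by blast

lemma parity_involution: "parity (involution n) = {n}"
  using count_run_replicate_A[of n 0 "[]" "{}"]
  by (simp add: parity_def Mon_act_def involution_def count_run_append)

lemma push_frame:
  assumes "length b \<le> length (push (t @ b) x)"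
  shows "push (t @ b) x = push t x @ b"
proof (cases "x = Q \<and> (\<exists>n r. t @ b = relator n @ r)")
  case True
  then obtain n r where tb: "t @ b = relator n @ r" and x: "x = Q" by blast
  moreover have "length t + length b = length (relator n) + length r"
    using arg_cong[OF tb, of length] by simp
  ultimately have "length (relator n) \<le> length t" using assms push_relator by simp
  then obtain r' where t: "t = relator n @ r'"
    using tb by (metis append_eq_append_conv_if append_take_drop_id)
  then show ?thesis using tb x push_relator by simp
next
  case False
  then have "\<not> (x = Q \<and> (\<exists>n r. t = relator n @ r))" by (metis append.assoc)
  then show ?thesis using False push_eq_Cons by simp
qed

lemma foldl_push_frame:
  assumes "\<And>k. k \<le> length w \<Longrightarrow> length b \<le> length (foldl push (t @ b) (take k w))"
  shows "foldl push (t @ b) w = foldl push t w @ b"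
  using assms
proof (induction w arbitrary: t)
  case (Cons x w)
  have "push (t @ b) x = push t x @ b" using Cons.prems[of 1] by (intro push_frame) simp
  moreover have "length b \<le> length (foldl push (push t x @ b) (take k w))" if "k \<le> length w" for k
    using Cons.prems[of "Suc k"] that calculation by simp
  ultimately show ?case using Cons.IH by simp
qed simp

(* Split the stack of e at its lowest point while the word of e is pushed onto it: the part b
   below that point is never touched, so e = b t with t b = 1. *)
lemma idempotent_stack_split:
  assumes s: "reduced s" and idem: "foldl push s (rev s) = s"
  obtains t b where "s = t @ b" "foldl push t (rev b) = []" "foldl push b (rev t) = s"
proof -
  define w where "w = rev s"
  define height where "height k = length (foldl push s (take k w))" for k
  obtain k0 where k0: "k0 \<le> length w" and lowest: "\<And>k. k \<le> length w \<Longrightarrow> height k0 \<le> height k"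
    using ex_min_if_finite[of "height ` {..length w}"] by (auto simp: not_less)
  define b where "b = foldl push s (take k0 w)"
  define t where "t = rev (drop k0 w)"
  have b_height: "length b = height k0" by (simp add: height_def b_def)
  have "reduced t" unfolding t_def w_def rev_drop using reduced_take[OF s] by simp
  have "foldl push ([] @ b) (drop k0 w) = foldl push [] (drop k0 w) @ b"
  proof (rule foldl_push_frame)
    fix j assume "j \<le> length (drop k0 w)"
    then show "length b \<le> length (foldl push ([] @ b) (take j (drop k0 w)))"
      using lowest[of "k0 + j"] k0 by (simp add: height_def b_def take_add)
  qed
  moreover have "foldl push b (drop k0 w) = s" using idem by (simp add: b_def w_def flip: foldl_append)
  ultimately have tb: "s = t @ b"
    using foldl_push_reduced[of "drop k0 w" "[]"] \<open>reduced t\<close> by (simp add: t_def)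
  moreover have "s = t @ rev (take k0 w)" by (simp add: t_def w_def flip: rev_append)
  ultimately have b: "b = rev (take k0 w)" by simp
  have "foldl push (t @ b) (take k0 w) = foldl push t (take k0 w) @ b"
  proof (rule foldl_push_frame)
    fix j assume "j \<le> length (take k0 w)"
    then show "length b \<le> length (foldl push (t @ b) (take j (take k0 w)))"
      using lowest[of j] k0 b_height by (simp add: height_def min_def flip: tb)
  qed
  moreover have "foldl push (t @ b) (take k0 w) = b" using b_def tb by metis
  ultimately have "foldl push t (rev b) = []" by (simp add: b)
  moreover have "foldl push b (rev t) = s"
    using \<open>foldl push b (drop k0 w) = s\<close> by (simp add: t_def)
  ultimately show ?thesis using tb that by blast
qed

lemma idempotent_factorization:
  assumes "e \<in> carrier Mon" "e \<otimes>\<^bsub>Mon\<^esub> e = e"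
  obtains l r where "l \<in> carrier Mon" "r \<in> carrier Mon" "l \<otimes>\<^bsub>Mon\<^esub> r = \<one>\<^bsub>Mon\<^esub>" "r \<otimes>\<^bsub>Mon\<^esub> l = e"
proof -
  obtain s where s: "e = to_nat s" "reduced s" using assms(1) by (auto simp: carrier_Mon)
  then have "foldl push s (rev s) = s" using assms(2) by (simp add: mult_Mon_to_nat)
  then obtain t b where tb: "s = t @ b" "foldl push t (rev b) = []" "foldl push b (rev t) = s"
    using idempotent_stack_split s(2) by blast
  have "reduced t" "reduced b"
    using reduced_take[OF s(2), of "length t"] reduced_drop[OF s(2), of "length t"] tb(1) by simp_all
  then show ?thesis
    using that[of "to_nat t" "to_nat b"] tb s(1) by (simp add: carrier_Mon mult_Mon_to_nat one_Mon)
qed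

lemma parity_sandwich_mult:
  assumes lr: "l \<in> carrier Mon" "r \<in> carrier Mon" "l \<otimes>\<^bsub>Mon\<^esub> r = \<one>\<^bsub>Mon\<^esub>" "r \<otimes>\<^bsub>Mon\<^esub> l = e"
    and x: "x \<in> carrier (max_subgroup Mon e)" and y: "y \<in> carrier Mon"
  shows "parity (l \<otimes>\<^bsub>Mon\<^esub> (x \<otimes>\<^bsub>Mon\<^esub> y) \<otimes>\<^bsub>Mon\<^esub> r) =
           sym_diff (parity (l \<otimes>\<^bsub>Mon\<^esub> x \<otimes>\<^bsub>Mon\<^esub> r)) (parity (l \<otimes>\<^bsub>Mon\<^esub> y \<otimes>\<^bsub>Mon\<^esub> r))"
proof -
  interpret monoid Mon by (rule monoid_Mon)
  obtain x' where x': "x' \<in> carrier Mon" "x' \<otimes>\<^bsub>Mon\<^esub> e = x'" "x' \<otimes>\<^bsub>Mon\<^esub> x = e"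
    and x_e: "x \<in> carrier Mon" "x \<otimes>\<^bsub>Mon\<^esub> e = x"
    using x unfolding in_max_subgroup_iff by blast
  have "(l \<otimes>\<^bsub>Mon\<^esub> x' \<otimes>\<^bsub>Mon\<^esub> r) \<otimes>\<^bsub>Mon\<^esub> (l \<otimes>\<^bsub>Mon\<^esub> x \<otimes>\<^bsub>Mon\<^esub> r) = l \<otimes>\<^bsub>Mon\<^esub> (r \<otimes>\<^bsub>Mon\<^esub> l) \<otimes>\<^bsub>Mon\<^esub> r"
    using sandwich_mult[OF lr(1,2) x'(1) x_e(1)] x' lr(4) by simp
  also have "\<dots> = \<one>\<^bsub>Mon\<^esub>"
    using lr(1-3) by (simp add: m_assoc)
  finally have "open_counters (l \<otimes>\<^bsub>Mon\<^esub> x \<otimes>\<^bsub>Mon\<^esub> r) = []"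
    by (rule open_counters_eq_Nil_if_left_invertible)
  then show ?thesis
    using sandwich_mult[OF lr(1,2) x_e(1) y] x_e(2) lr(4) by (simp add: parity_mult)
qed

lemma max_subgroup_Mon_not_finitely_generated:
  assumes e: "e \<in> carrier Mon" "e \<otimes>\<^bsub>Mon\<^esub> e = e"
  shows "\<not> finitely_generated_group (max_subgroup Mon e)"
proof -
  interpret Mon: monoid Mon by (rule monoid_Mon)
  interpret H: group "max_subgroup Mon e" by (rule Mon.group_max_subgroup[OF e])
  obtain l r where lr: "l \<in> carrier Mon" "r \<in> carrier Mon" "l \<otimes>\<^bsub>Mon\<^esub> r = \<one>\<^bsub>Mon\<^esub>" "r \<otimes>\<^bsub>Mon\<^esub> l = e"
    using idempotent_factorization[OF e] .
  define f where "f x = parity (l \<otimes>\<^bsub>Mon\<^esub> x \<otimes>\<^bsub>Mon\<^esub> r)" for x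
  have "n \<in> f (r \<otimes>\<^bsub>Mon\<^esub> involution n \<otimes>\<^bsub>Mon\<^esub> l)" for n
  proof -
    have "l \<otimes>\<^bsub>Mon\<^esub> (r \<otimes>\<^bsub>Mon\<^esub> involution n \<otimes>\<^bsub>Mon\<^esub> l) \<otimes>\<^bsub>Mon\<^esub> r = involution n"
      using lr involution_carrier by (simp add: Mon.m_assoc flip: Mon.m_assoc[of l r])
    then show ?thesis by (simp add: f_def parity_involution)
  qed
  then have "UNIV \<subseteq> (\<Union>x\<in>carrier (max_subgroup Mon e). f x)"
    using Mon.Units_sandwich_in_max_subgroup[OF lr involution_Units] by blast
  then have "infinite (\<Union>x\<in>carrier (max_subgroup Mon e). f x)"
    using infinite_UNIV_nat finite_subset by blast
  moreover have "f (x \<otimes>\<^bsub>max_subgroup Mon e\<^esub> y) = sym_diff (f x) (f y)"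
    if "x \<in> carrier (max_subgroup Mon e)" "y \<in> carrier (max_subgroup Mon e)" for x y
    using parity_sandwich_mult[OF lr that(1)] that(2) by (simp add: f_def in_max_subgroup_iff)
  ultimately show ?thesis
    using H.not_finitely_generated_if_sym_diff_hom[of f] finite_parity unfolding f_def by blast
qed

theorem mainTheorem1:
  shows "\<exists>M :: nat monoid. context_free_monoid M \<and>
           (\<forall>e\<in>carrier M. e \<otimes>\<^bsub>M\<^esub> e = e \<longrightarrow>
              \<not> finitely_generated_group (max_subgroup M e))"
  using context_free_monoid_Mon max_subgroup_Mon_not_finitely_generated by blast

end
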